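(* Let $X=\{v_1,\dots,v_n\}$, let $w:X\to\mathbb{R}^+$, and let $g:2^X\to\mathbb{R}^+$ be monotone nondecreasing with $g(\emptyset)=0$. Let $\delta=\min\{g(C\cup\{v\})-g(C): C\subset X, v\in X\setminus C, g(C\cup\{v\})>g(C)\}$. Identify subsets of $X$ with vectors $\mathbf{x}\in\{0,1\}^n$ and define $f_1(\mathbf{x})=\left\lfloor \frac{g(X)-g(\mathbf{x})}{\delta}\right\rfloor\delta$ and $f_2(\mathbf{x})=w(\mathbf{x})=\sum_{x\in\mathbf{x}}w(x)$. Let $\beta=\left\lfloor\frac{g(X)-g(\emptyset)}{\delta}\right\rfloor$. Then throughout the run of GSEMO (as described in the context) on the bi-objective function $(f_1,f_2)$, the population satisfies $|P|\le\beta+1$.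
   Context: Both objectives are to be minimized. $\mathbf{x}'$ weakly dominates $\mathbf{x}$ ($\mathbf{x}'\succeq\mathbf{x}$) if $f_1(\mathbf{x}')\le f_1(\mathbf{x})$ and $f_2(\mathbf{x}')\le f_2(\mathbf{x})$; $\mathbf{x}'$ dominates $\mathbf{x}$ ($\mathbf{x}'\succ\mathbf{x}$) if additionally one of the inequalities is strict. GSEMO: start with population $P=\{\mathbf{0}\}$; in each iteration $t=1,\dots,T$, select $\mathbf{x}\in P$ uniformly at random, generate $\mathbf{x}'$ by flipping each bit of $\mathbf{x}$ independently with probability $1/n$; if no $\mathbf{z}\in P$ satisfies $\mathbf{z}\succ\mathbf{x}'$, set $P\leftarrow (P\setminus\{\mathbf{z}\in P:\mathbf{x}'\succeq\mathbf{z}\})\cup\{\mathbf{x}'\}$. At the end it returns $\arg\min\{f_2(\mathbf{x}):\mathbf{x}\in P, f_1(\mathbf{x})=0\}$ if such an individual exists. *)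

theory Defs
  imports Main Complex_Main
begin

(* Subsets of the ground set X are identified with bit vectors in {0,1}^n, n = card X. *)

definition delta :: "'a set \<Rightarrow> ('a set \<Rightarrow> real) \<Rightarrow> real" where
  "delta X g = Min {g (C \<union> {v}) - g C | C v. C \<subseteq> X \<and> v \<in> X - C \<and> g (C \<union> {v}) > g C}"

definition f1 :: "'a set \<Rightarrow> ('a set \<Rightarrow> real) \<Rightarrow> 'a set \<Rightarrow> real" where
  "f1 X g x = real_of_int \<lfloor>(g X - g x) / delta X g\<rfloor> * delta X g"

definition f2 :: "('a \<Rightarrow> real) \<Rightarrow> 'a set \<Rightarrow> real" where
  "f2 w x = (\<Sum>v\<in>x. w v)"

definition beta :: "'a set \<Rightarrow> ('a set \<Rightarrow> real) \<Rightarrow> int" where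
  "beta X g = \<lfloor>(g X - g {}) / delta X g\<rfloor>"

definition wdom :: "'a set \<Rightarrow> ('a set \<Rightarrow> real) \<Rightarrow> ('a \<Rightarrow> real) \<Rightarrow> 'a set \<Rightarrow> 'a set \<Rightarrow> bool" where
  "wdom X g w x' x \<longleftrightarrow> f1 X g x' \<le> f1 X g x \<and> f2 w x' \<le> f2 w x"

definition dom :: "'a set \<Rightarrow> ('a set \<Rightarrow> real) \<Rightarrow> ('a \<Rightarrow> real) \<Rightarrow> 'a set \<Rightarrow> 'a set \<Rightarrow> bool" where
  "dom X g w x' x \<longleftrightarrow> wdom X g w x' x \<and> (f1 X g x' < f1 X g x \<or> f2 w x' < f2 w x)"

(* Offspring that standard bit mutation (each bit flipped independently with prob. 1/n)
   produces with positive probability: if n = 1 every bit is flipped surely,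
   otherwise every bit string has positive probability. *)
definition offspring :: "'a set \<Rightarrow> 'a set \<Rightarrow> 'a set set" where
  "offspring X x = (if card X = 1 then {X - x} else Pow X)"

inductive gsemo_reachable :: "'a set \<Rightarrow> ('a set \<Rightarrow> real) \<Rightarrow> ('a \<Rightarrow> real) \<Rightarrow> 'a set set \<Rightarrow> bool"
  for X g w where
  init: "gsemo_reachable X g w {{}}"
| reject: "gsemo_reachable X g w P \<Longrightarrow> x \<in> P \<Longrightarrow> x' \<in> offspring X x \<Longrightarrow>
           (\<exists>z\<in>P. dom X g w z x') \<Longrightarrow> gsemo_reachable X g w P"
| accept: "gsemo_reachable X g w P \<Longrightarrow> x \<in> P \<Longrightarrow> x' \<in> offspring X x \<Longrightarrow>
           \<not> (\<exists>z\<in>P. dom X g w z x') \<Longrightarrow>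
           gsemo_reachable X g w ((P - {z \<in> P. wdom X g w x' z}) \<union> {x'})"

end

theory Submission
  imports Defs
begin

text \<open>No two distinct members of a GSEMO population weakly dominate each other, so in particular
  they have distinct \<open>f1\<close>-values. Every subset \<open>x\<close> of \<open>X\<close> has
  \<open>f1 x = k \<delta>\<close> with \<open>0 \<le> k \<le> \<beta>\<close> by monotonicity of \<open>g\<close>, hence there are at most \<open>\<beta> + 1\<close>
  distinct \<open>f1\<close>-values and at most that many individuals.\<close>

lemma gsemo_reachable_subset_Pow:
  assumes "gsemo_reachable X g w P"
  shows "P \<subseteq> Pow X"
  using assms
proof (induction rule: gsemo_reachable.induct)
  case (accept P x x')
  then have "x' \<subseteq> X" by (auto simp: offspring_def split: if_splits)
  with accept.IH show ?case by auto
qed auto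

lemma gsemo_reachable_no_wdom:
  assumes "gsemo_reachable X g w P" "a \<in> P" "b \<in> P" "a \<noteq> b"
  shows "\<not> wdom X g w a b"
  using assms
proof (induction arbitrary: a b rule: gsemo_reachable.induct)
  case (accept P x x')
  then show ?case by (auto simp: wdom_def dom_def)
qed auto

lemma inj_on_f1_if_no_wdom:
  assumes "\<And>a b. a \<in> P \<Longrightarrow> b \<in> P \<Longrightarrow> a \<noteq> b \<Longrightarrow> \<not> wdom X g w a b"
  shows "inj_on (f1 X g) P"
proof (rule inj_onI, rule ccontr)
  fix a b assume "a \<in> P" "b \<in> P" "f1 X g a = f1 X g b" "a \<noteq> b"
  moreover have "f2 w a \<le> f2 w b \<or> f2 w b \<le> f2 w a" by linarith
  ultimately show False using assms unfolding wdom_def by (metis order_refl)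
qed

lemma exists_strict_singleton_increase:
  fixes g :: "'a set \<Rightarrow> real"
  assumes "finite D" "x \<union> D \<subseteq> X" "g x < g (x \<union> D)"
  shows "\<exists>C v. C \<subseteq> X \<and> v \<in> X - C \<and> g C < g (C \<union> {v})"
  using assms
proof (induction D rule: finite_induct)
  case (insert d D)
  show ?case
  proof (cases "g (x \<union> D) < g (x \<union> insert d D)")
    case True
    then have "d \<notin> x \<union> D" by (metis insert_absorb Un_insert_right less_irrefl)
    moreover have "x \<union> insert d D = (x \<union> D) \<union> {d}" by auto
    ultimately show ?thesis using True insert.prems
      by (intro exI[of _ "x \<union> D"] exI[of _ d]) auto
  next
    case False
    with insert show ?thesis by auto
  qed
qed simp

lemma delta_pos:
  fixes g :: "'a set \<Rightarrow> real"
  assumes "finite X" "x \<subseteq> X" "g x < g X"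
  shows "delta X g > 0"
proof -
  define S where "S = {g (C \<union> {v}) - g C | C v. C \<subseteq> X \<and> v \<in> X - C \<and> g (C \<union> {v}) > g C}"
  have "S \<subseteq> (\<lambda>(C, v). g (C \<union> {v}) - g C) ` (Pow X \<times> X)" unfolding S_def by auto
  then have "finite S" using assms(1) finite_subset by blast
  have "x \<union> (X - x) \<subseteq> X" "g x < g (x \<union> (X - x))" using assms(2,3) by (auto simp: Un_absorb1)
  then have "S \<noteq> {}"
    using exists_strict_singleton_increase[of "X - x" x X g] assms(1) unfolding S_def by blast
  moreover have "\<And>s. s \<in> S \<Longrightarrow> s > 0" unfolding S_def by auto
  moreover have "delta X g = Min S" unfolding S_def delta_def ..
  ultimately show ?thesis using \<open>finite S\<close> by simp
qed

lemma beta_nonneg: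
  fixes g :: "'a set \<Rightarrow> real"
  assumes "finite X" "g {} \<le> g X"
  shows "beta X g \<ge> 0"
proof (cases "g {} = g X")
  case False
  then have "delta X g > 0" using delta_pos[of X "{}" g] assms by simp
  with assms(2) show ?thesis by (simp add: beta_def)
qed (simp add: beta_def)

lemma f1_in_multiples_of_delta:
  fixes g :: "'a set \<Rightarrow> real"
  assumes "finite X" "x \<subseteq> X" "g {} \<le> g x" "g x \<le> g X"
  shows "f1 X g x \<in> (\<lambda>k. real_of_int k * delta X g) ` {0..beta X g}"
proof (cases "g x = g X")
  case True
  moreover have "beta X g \<ge> 0" using beta_nonneg assms by fastforce
  ultimately show ?thesis by (force simp: f1_def)
next
  case False
  then have \<delta>: "delta X g > 0" using delta_pos assms by fastforce
  then have "(g X - g x) / delta X g \<le> (g X - g {}) / delta X g"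
    using assms(3) by (simp add: divide_right_mono)
  then have "\<lfloor>(g X - g x) / delta X g\<rfloor> \<le> beta X g"
    unfolding beta_def by (rule floor_mono)
  moreover have "\<lfloor>(g X - g x) / delta X g\<rfloor> \<ge> 0" using \<delta> assms(4) by simp
  ultimately show ?thesis unfolding f1_def by auto
qed

theorem lemma1:
  fixes X :: "'a set" and w :: "'a \<Rightarrow> real" and g :: "'a set \<Rightarrow> real" and P :: "'a set set"
  assumes "finite X"
    and "\<And>v. v \<in> X \<Longrightarrow> w v \<ge> 0"
    and "\<And>A. A \<subseteq> X \<Longrightarrow> g A \<ge> 0"
    and "\<And>A B. A \<subseteq> B \<Longrightarrow> B \<subseteq> X \<Longrightarrow> g A \<le> g B"
    and "g {} = 0"
    and "gsemo_reachable X g w P"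
  shows "int (card P) \<le> beta X g + 1"
proof -
  have "inj_on (f1 X g) P"
    using inj_on_f1_if_no_wdom gsemo_reachable_no_wdom[OF assms(6)] by blast
  then have "card P = card (f1 X g ` P)" by (simp add: card_image)
  also have "\<dots> \<le> card ((\<lambda>k. real_of_int k * delta X g) ` {0..beta X g})"
    using gsemo_reachable_subset_Pow[OF assms(6)] assms(1,4)
    by (intro card_mono) (auto intro!: f1_in_multiples_of_delta)
  also have "\<dots> \<le> card {0..beta X g}" by (rule card_image_le) simp
  finally show ?thesis
    using beta_nonneg[of X g] assms(1,4) by simp
qed

end
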